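(* Let $\boldsymbol{X}$ be a covariate vector, let $Z$ be an instrument taking values in $\{0_a,1_a,0_b,1_b\}$, let $D(Z=z)\in\{0,1\}$ denote the potential treatment under $Z=z$, and let $Y(D=d)$, $d\in\{0,1\}$, denote the potential outcomes, all defined on a common probability space with distribution $P_0$. Assume the standing nested-monotonicity structure: $D(Z=1_a)-D(Z=0_a)\in\{0,1\}$ and $D(Z=1_b)-D(Z=0_b)\in\{0,1\}$ almost surely, and $D(Z=1_a)-D(Z=0_a)=1$ implies $D(Z=1_b)-D(Z=0_b)=1$. Let $S$ denote the principal stratum, where $\{S=\text{ACO}\}=\{D(Z=1_a)-D(Z=0_a)=1\}$ (always-compliers) and $\{S=\text{SW}\}=\{D(Z=1_b)-D(Z=0_b)=1,\ D(Z=1_a)-D(Z=0_a)=0\}$ (switchers), and assume $P_0(S=\text{ACO}\mid \boldsymbol{X})>0$ and $P_0(S=\text{SW}\mid\boldsymbol{X})>0$ almost surely. Define $\text{ATE}_{P_0}(\boldsymbol{x})=\mathbb{E}_{P_0}[Y(D=1)-Y(D=0)\mid \boldsymbol{X}=\boldsymbol{x}]$, $\text{ACOATE}_{P_0}(\boldsymbol{x})=\mathbb{E}_{P_0}[Y(D=1)-Y(D=0)\mid S=\text{ACO},\boldsymbol{X}=\boldsymbol{x}]$, $\text{SWATE}_{P_0}(\boldsymbol{x})=\mathbb{E}_{P_0}[Y(D=1)-Y(D=0)\mid S=\text{SW},\boldsymbol{X}=\boldsymbol{x}]$. Suppose one of the following holds: (i) (Principal ignorability) $\mathbb{E}_{P_0}[Y(D=d)\mid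 S=s,\boldsymbol{X}]=\mathbb{E}_{P_0}[Y(D=d)\mid \boldsymbol{X}]$ for $d\in\{0,1\}$ and every stratum value $s$; (ii) (No unmeasured common effect modifier) $\text{Cov}_{P_0}\big[(D(Z=1_a)-D(Z=0_a))(Y(D=1)-Y(D=0))\mid \boldsymbol{X}\big]=0$ and $\text{Cov}_{P_0}\big[(D(Z=1_b)-D(Z=0_b))(Y(D=1)-Y(D=0))\mid \boldsymbol{X}\big]=0$, where the covariance is understood as that between $D(Z=1_\cdot)-D(Z=0_\cdot)$ and $Y(D=1)-Y(D=0)$ conditional on $\boldsymbol{X}$. Then $\text{ATE}_{P_0}(\boldsymbol{x})=\text{ACOATE}_{P_0}(\boldsymbol{x})=\text{SWATE}_{P_0}(\boldsymbol{x})$.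
   Context: Nested instrumental variable design: two IV pairs $\{0_a,1_a\}$ and $\{0_b,1_b\}$, with compliers under pair $a$ (always-compliers, ACO) also being compliers under pair $b$; switchers (SW) comply under pair $b$ but not under pair $a$. *)

theory Defs
  imports "HOL-Probability.Probability"
begin

datatype iv = Z0a | Z1a | Z0b | Z1b

definition sigmaX :: "'a measure \<Rightarrow> 'b measure \<Rightarrow> ('a \<Rightarrow> 'b) \<Rightarrow> 'a measure" where
  "sigmaX M N X = vimage_algebra (space M) X N"

definition cond_exp_event :: "'a measure \<Rightarrow> 'a measure \<Rightarrow> 'a set \<Rightarrow> ('a \<Rightarrow> real) \<Rightarrow> 'a \<Rightarrow> real" where
  "cond_exp_event M F A f = (\<lambda>\<omega>. real_cond_exp M F (\<lambda>\<omega>'. indicator A \<omega>' * f \<omega>') \<omega>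
                                  / real_cond_exp M F (indicator A) \<omega>)"

definition cond_cov :: "'a measure \<Rightarrow> 'a measure \<Rightarrow> ('a \<Rightarrow> real) \<Rightarrow> ('a \<Rightarrow> real) \<Rightarrow> 'a \<Rightarrow> real" where
  "cond_cov M F f g = (\<lambda>\<omega>. real_cond_exp M F (\<lambda>\<omega>'. f \<omega>' * g \<omega>') \<omega>
                            - real_cond_exp M F f \<omega> * real_cond_exp M F g \<omega>)"

definition ACO :: "'a measure \<Rightarrow> (iv \<Rightarrow> 'a \<Rightarrow> real) \<Rightarrow> 'a set" where
  "ACO M D = {\<omega> \<in> space M. D Z1a \<omega> - D Z0a \<omega> = 1}"

definition SW :: "'a measure \<Rightarrow> (iv \<Rightarrow> 'a \<Rightarrow> real) \<Rightarrow> 'a set" where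
  "SW M D = {\<omega> \<in> space M. D Z1b \<omega> - D Z0b \<omega> = 1 \<and> D Z1a \<omega> - D Z0a \<omega> = 0}"

end

theory Submission
  imports Defs
begin

text \<open>Under principal ignorability the claim is linearity of the conditional expectation given a
  stratum. Under (ii), monotonicity and nesting make \<open>D(1\<^sub>a) - D(0\<^sub>a)\<close> the indicator of ACO and
  \<open>D(1\<^sub>b) - D(0\<^sub>b)\<close> the sum of the indicators of ACO and SW almost surely. Conditional covariance
  being additive in its first argument, both stratum indicators are then conditionally uncorrelated
  with \<open>Y(1) - Y(0)\<close>, i.e. \<open>E[1\<^sub>S (Y(1) - Y(0)) | X] = P(S | X) E[Y(1) - Y(0) | X]\<close>; dividing by
  \<open>P(S | X) > 0\<close> gives the claim for both strata.\<close>

lemma subalgebra_sigmaX: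
  assumes "X \<in> measurable M N"
  shows "subalgebra M (sigmaX M N X)"
proof -
  have "sets (sigmaX M N X) = {X -` A \<inter> space M | A. A \<in> sets N}"
    unfolding sigmaX_def
    by (rule sets_vimage_algebra2) (use assms in \<open>auto simp: measurable_def\<close>)
  then have "sets (sigmaX M N X) \<subseteq> sets M"
    using assms by (auto simp: measurable_sets)
  then show ?thesis
    unfolding subalgebra_def sigmaX_def by simp
qed

lemma cond_exp_event_eq_if_cond_cov_zero:
  assumes "AE \<omega> in M. real_cond_exp M F (indicator A) \<omega> \<noteq> 0"
    and "AE \<omega> in M. cond_cov M F (indicator A) f \<omega> = 0"
  shows "AE \<omega> in M. cond_exp_event M F A f \<omega> = real_cond_exp M F f \<omega>"
  using assms by eventually_elim (simp add: cond_exp_event_def cond_cov_def field_simps)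

context sigma_finite_subalgebra
begin

lemma cond_exp_event_diff:
  assumes "A \<in> sets M" "integrable M f" "integrable M g"
  shows "AE \<omega> in M. cond_exp_event M F A (\<lambda>x. f x - g x) \<omega>
                      = cond_exp_event M F A f \<omega> - cond_exp_event M F A g \<omega>"
proof -
  have "AE \<omega> in M. real_cond_exp M F (\<lambda>x. indicator A x * f x - indicator A x * g x) \<omega>
          = real_cond_exp M F (\<lambda>x. indicator A x * f x) \<omega>
            - real_cond_exp M F (\<lambda>x. indicator A x * g x) \<omega>"
    using integrable_mult_indicator[OF assms(1,2)] integrable_mult_indicator[OF assms(1,3)]
    by (intro real_cond_exp_diff) simp_all
  then show ?thesis
    by eventually_elim (simp add: cond_exp_event_def right_diff_distrib diff_divide_distrib)
qed

lemma cond_cov_cong: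
  assumes "AE x in M. f x = g x"
    and [measurable]: "f \<in> borel_measurable M" "g \<in> borel_measurable M" "h \<in> borel_measurable M"
  shows "AE \<omega> in M. cond_cov M F f h \<omega> = cond_cov M F g h \<omega>"
proof -
  have "AE \<omega> in M. real_cond_exp M F (\<lambda>x. f x * h x) \<omega> = real_cond_exp M F (\<lambda>x. g x * h x) \<omega>"
    using assms(1) by (intro real_cond_exp_cong) auto
  moreover have "AE \<omega> in M. real_cond_exp M F f \<omega> = real_cond_exp M F g \<omega>"
    using assms(1) by (intro real_cond_exp_cong) auto
  ultimately show ?thesis
    by eventually_elim (simp add: cond_cov_def)
qed

lemma cond_cov_add_left:
  assumes "integrable M f" "integrable M g"
    and "integrable M (\<lambda>x. f x * h x)" "integrable M (\<lambda>x. g x * h x)"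
  shows "AE \<omega> in M. cond_cov M F (\<lambda>x. f x + g x) h \<omega> = cond_cov M F f h \<omega> + cond_cov M F g h \<omega>"
proof -
  have "AE \<omega> in M. real_cond_exp M F (\<lambda>x. f x * h x + g x * h x) \<omega>
          = real_cond_exp M F (\<lambda>x. f x * h x) \<omega> + real_cond_exp M F (\<lambda>x. g x * h x) \<omega>"
    using assms by (intro real_cond_exp_add)
  moreover have "AE \<omega> in M. real_cond_exp M F (\<lambda>x. f x + g x) \<omega>
                   = real_cond_exp M F f \<omega> + real_cond_exp M F g \<omega>"
    using assms by (intro real_cond_exp_add)
  ultimately show ?thesis
    by eventually_elim (simp add: cond_cov_def distrib_right)
qed

lemma cond_exp_event_diff_eq_if_ignorable:
  assumes "A \<in> sets M" "integrable M Y1" "integrable M Y0"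
    and "AE \<omega> in M. cond_exp_event M F A Y1 \<omega> = real_cond_exp M F Y1 \<omega>"
    and "AE \<omega> in M. cond_exp_event M F A Y0 \<omega> = real_cond_exp M F Y0 \<omega>"
  shows "AE \<omega> in M. cond_exp_event M F A (\<lambda>x. Y1 x - Y0 x) \<omega>
                      = real_cond_exp M F (\<lambda>x. Y1 x - Y0 x) \<omega>"
  using assms(4,5) cond_exp_event_diff[OF assms(1-3)] real_cond_exp_diff[OF assms(2,3)]
  by eventually_elim simp

end

context finite_measure_subalgebra
begin

lemma cond_cov_indicators_zero_if_nested_uncorrelated:
  assumes [measurable]: "A \<in> sets M" "B \<in> sets M"
    "Da \<in> borel_measurable M" "Db \<in> borel_measurable M" and "integrable M h"
    and "AE x in M. Da x = indicator A x"
    and "AE x in M. Db x = indicator A x + indicator B x"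
    and "AE \<omega> in M. cond_cov M F Da h \<omega> = 0"
    and "AE \<omega> in M. cond_cov M F Db h \<omega> = 0"
  shows "AE \<omega> in M. cond_cov M F (indicator A) h \<omega> = 0"
    and "AE \<omega> in M. cond_cov M F (indicator B) h \<omega> = 0"
proof -
  have [measurable]: "h \<in> borel_measurable M"
    using \<open>integrable M h\<close> by auto
  have "AE \<omega> in M. cond_cov M F Da h \<omega> = cond_cov M F (indicator A) h \<omega>"
    using assms(6) by (rule cond_cov_cong) measurable
  with assms(8) show A_uncorrelated: "AE \<omega> in M. cond_cov M F (indicator A) h \<omega> = 0"
    by eventually_elim simp
  have "AE \<omega> in M. cond_cov M F Db h \<omega>
          = cond_cov M F (\<lambda>x. indicator A x + indicator B x) h \<omega>"
    using assms(7) by (rule cond_cov_cong) measurable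
  moreover have "AE \<omega> in M. cond_cov M F (\<lambda>x. indicator A x + indicator B x) h \<omega>
                   = cond_cov M F (indicator A) h \<omega> + cond_cov M F (indicator B) h \<omega>"
    using integrable_mult_indicator[OF assms(1,5)] integrable_mult_indicator[OF assms(2,5)]
    by (intro cond_cov_add_left) (simp_all add: emeasure_finite less_top[symmetric])
  ultimately show "AE \<omega> in M. cond_cov M F (indicator B) h \<omega> = 0"
    using assms(9) A_uncorrelated by eventually_elim simp
qed

end

lemma AE_compliance_a_eq_indicator_ACO:
  assumes "AE \<omega> in M. D Z1a \<omega> - D Z0a \<omega> \<in> {0, 1}"
  shows "AE \<omega> in M. D Z1a \<omega> - D Z0a \<omega> = indicator (ACO M D) \<omega>"
  using assms AE_space by eventually_elim (auto simp: ACO_def indicator_def)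

lemma AE_compliance_b_eq_indicator_ACO_SW:
  assumes "AE \<omega> in M. D Z1a \<omega> - D Z0a \<omega> \<in> {0, 1}"
    and "AE \<omega> in M. D Z1b \<omega> - D Z0b \<omega> \<in> {0, 1}"
    and "AE \<omega> in M. D Z1a \<omega> - D Z0a \<omega> = 1 \<longrightarrow> D Z1b \<omega> - D Z0b \<omega> = 1"
  shows "AE \<omega> in M. D Z1b \<omega> - D Z0b \<omega> = indicator (ACO M D) \<omega> + indicator (SW M D) \<omega>"
  using assms AE_space by eventually_elim (auto simp: ACO_def SW_def indicator_def)

theorem mainTheorem1:
  fixes M :: "'a measure" and N :: "'b measure"
    and X :: "'a \<Rightarrow> 'b" and D :: "iv \<Rightarrow> 'a \<Rightarrow> real"
    and Y1 Y0 :: "'a \<Rightarrow> real"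
  assumes P: "prob_space M"
    and X_meas: "X \<in> measurable M N"
    and D_meas: "\<And>z. D z \<in> borel_measurable M"
    and D_bin: "\<And>z \<omega>. \<omega> \<in> space M \<Longrightarrow> D z \<omega> \<in> {0, 1}"
    and Y1_int: "integrable M Y1" and Y0_int: "integrable M Y0"
    and mono_a: "AE \<omega> in M. D Z1a \<omega> - D Z0a \<omega> \<in> {0, 1}"
    and mono_b: "AE \<omega> in M. D Z1b \<omega> - D Z0b \<omega> \<in> {0, 1}"
    and nested: "AE \<omega> in M. D Z1a \<omega> - D Z0a \<omega> = 1 \<longrightarrow> D Z1b \<omega> - D Z0b \<omega> = 1"
    and pos_ACO: "AE \<omega> in M. real_cond_exp M (sigmaX M N X) (indicator (ACO M D)) \<omega> > 0"
    and pos_SW: "AE \<omega> in M. real_cond_exp M (sigmaX M N X) (indicator (SW M D)) \<omega> > 0"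
    and ident:
      "(\<forall>A \<in> {ACO M D, SW M D}. \<forall>Yd \<in> {Y1, Y0}.
          AE \<omega> in M. cond_exp_event M (sigmaX M N X) A Yd \<omega>
                       = real_cond_exp M (sigmaX M N X) Yd \<omega>)
       \<or> ((AE \<omega> in M. cond_cov M (sigmaX M N X) (\<lambda>\<omega>'. D Z1a \<omega>' - D Z0a \<omega>')
                                      (\<lambda>\<omega>'. Y1 \<omega>' - Y0 \<omega>') \<omega> = 0)
          \<and> (AE \<omega> in M. cond_cov M (sigmaX M N X) (\<lambda>\<omega>'. D Z1b \<omega>' - D Z0b \<omega>')
                                      (\<lambda>\<omega>'. Y1 \<omega>' - Y0 \<omega>') \<omega> = 0))"
  shows "AE \<omega> in M.
           real_cond_exp M (sigmaX M N X) (\<lambda>\<omega>'. Y1 \<omega>' - Y0 \<omega>') \<omega>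
             = cond_exp_event M (sigmaX M N X) (ACO M D) (\<lambda>\<omega>'. Y1 \<omega>' - Y0 \<omega>') \<omega>
         \<and> cond_exp_event M (sigmaX M N X) (ACO M D) (\<lambda>\<omega>'. Y1 \<omega>' - Y0 \<omega>') \<omega>
             = cond_exp_event M (sigmaX M N X) (SW M D) (\<lambda>\<omega>'. Y1 \<omega>' - Y0 \<omega>') \<omega>"
proof -
  let ?F = "sigmaX M N X" and ?T = "\<lambda>\<omega>'. Y1 \<omega>' - Y0 \<omega>'"
  interpret prob_space M by (rule P)
  interpret finite_measure_subalgebra M ?F
    by unfold_locales (rule subalgebra_sigmaX[OF X_meas])
  note [measurable] = D_meas borel_measurable_integrable[OF Y1_int] borel_measurable_integrable[OF Y0_int]
  have strata [measurable]: "ACO M D \<in> sets M" "SW M D \<in> sets M"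
    unfolding ACO_def SW_def by measurable
  have Y_diff_int: "integrable M ?T"
    using Y1_int Y0_int by auto
  have stratum_effect: "AE \<omega> in M. cond_exp_event M ?F A ?T \<omega> = real_cond_exp M ?F ?T \<omega>"
    if A: "A \<in> {ACO M D, SW M D}" for A
    using ident
  proof
    assume "\<forall>A \<in> {ACO M D, SW M D}. \<forall>Yd \<in> {Y1, Y0}.
              AE \<omega> in M. cond_exp_event M ?F A Yd \<omega> = real_cond_exp M ?F Yd \<omega>"
    then show ?thesis
      using A strata Y1_int Y0_int by (intro cond_exp_event_diff_eq_if_ignorable) auto
  next
    assume "(AE \<omega> in M. cond_cov M ?F (\<lambda>\<omega>'. D Z1a \<omega>' - D Z0a \<omega>') ?T \<omega> = 0)
          \<and> (AE \<omega> in M. cond_cov M ?F (\<lambda>\<omega>'. D Z1b \<omega>' - D Z0b \<omega>') ?T \<omega> = 0)"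
    then have uncorrelated: "AE \<omega> in M. cond_cov M ?F (indicator A) ?T \<omega> = 0"
      using A cond_cov_indicators_zero_if_nested_uncorrelated[OF strata _ _ Y_diff_int
          AE_compliance_a_eq_indicator_ACO[OF mono_a]
          AE_compliance_b_eq_indicator_ACO_SW[OF mono_a mono_b nested]]
      by auto
    have "AE \<omega> in M. real_cond_exp M ?F (indicator A) \<omega> \<noteq> 0"
      using A pos_ACO pos_SW by (auto elim: eventually_mono)
    then show ?thesis
      using uncorrelated by (rule cond_exp_event_eq_if_cond_cov_zero)
  qed
  have "AE \<omega> in M. cond_exp_event M ?F (ACO M D) ?T \<omega> = real_cond_exp M ?F ?T \<omega>"
    and "AE \<omega> in M. cond_exp_event M ?F (SW M D) ?T \<omega> = real_cond_exp M ?F ?T \<omega>"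
    by (auto intro: stratum_effect)
  then show ?thesis
    by eventually_elim simp
qed

end
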